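(* Consider the controlled SI optimal control problem described in the context, with one control per node ($M=N$), given (fixed) initial conditions, and quadratic costs $g_j(u)=c_ju^2$ with $c_j>0$ for $1\le j\le N$. Let $(\boldsymbol i^*(t), \boldsymbol\lambda^*(t), \boldsymbol u^*(t))$, $t\in[0,T]$, be an optimal state trajectory, its associated adjoint trajectory, and optimal controls satisfying the Pontryagin Maximum Principle conditions listed in the context. Then each optimal control $u_j^*(t)$, $1\le j\le N$, is a convex function of $t$ on $[0,T]$.
   Context: Let $N\geq 1$, and let $\boldsymbol A=(A_{jk})$ be an $N\times N$ symmetric matrix with entries in $\{0,1\}$ (adjacency matrix of an undirected, unweighted network on nodes $1,\dots,N$). Fix $\beta>0$, a horizon $T>0$, and initial values $x_{0j}\in[0,1]$. Each node $j$ has its own control $u_j(t)$. The state $i_j(t)\in[0,1]$ (probability node $j$ is informed), with $s_j(t)=1-i_j(t)$, evolves by $\dot i_j(t)=\beta s_j(t)\sum_{k=1}^N A_{jk}i_k(t)+u_j(t)s_j(t)$, $i_j(0)=x_{0j}$, $1\le j\le N$. The objective to be maximized is $J=\frac1N\sum_{j=1}^N i_j(T)-\sum_{j=1}^N\int_0^T g_j(u_j(t))\,dt$. The optimal controls are nonnegative: $u_j^*(t)\ge 0$. The Hamiltonian is $H(\boldsymbol i,\boldsymbol\lambda,\boldsymbol u)=-\sum_{j=1}^N g_j(u_j)+\sum_{l=1}^N\lambda_l\big(\beta s_l\sum_{k=1}^N A_{lk}i_k+u_l s_l\big)$ with $s_l=1-i_l$. The Pontryagin conditions are: $\boldsymbol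 i^*$ solves the state equations above; the adjoint variables satisfy $\dot\lambda_j^*(t)=-\beta\sum_{l=1}^N\lambda_l^*(t)s_l^*(t)A_{lj}+\beta\lambda_j^*(t)\sum_{k=1}^N A_{jk}i_k^*(t)+\lambda_j^*(t)u_j^*(t)$ with $\lambda_j^*(T)=1/N$; and for each $t$, $\boldsymbol u^*(t)$ maximizes $H(\boldsymbol i^*(t),\boldsymbol\lambda^*(t),\cdot)$, which gives $g_j'(u_j^*(t))=\lambda_j^*(t)s_j^*(t)$ for each $j$. *)

theory Defs
  imports "HOL-Analysis.Analysis"
begin

end

theory Submission
  imports Defs
begin

text \<open>Stationarity of the Hamiltonian gives \<open>2 c\<^sub>j u\<^sub>j = \<lambda>\<^sub>j s\<^sub>j\<close>, and the state and
  adjoint equations combine into \<open>u\<^sub>j' = - \<beta> s\<^sub>j (\<Sum>\<^sub>l A\<^sub>l\<^sub>j c\<^sub>l u\<^sub>l) / c\<^sub>j\<close>. The states stay in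
  \<open>[0, 1]\<close> (positivity for cooperative linear differential inequalities, by a Gronwall
  estimate on the squared negative parts), so with \<open>u \<ge> 0\<close> every \<open>u\<^sub>j\<close> is nonincreasing.
  Then \<open>s\<^sub>j\<close> and \<open>\<Sum>\<^sub>l A\<^sub>l\<^sub>j c\<^sub>l u\<^sub>l\<close> are nonnegative and nonincreasing, so \<open>u\<^sub>j'\<close> is
  nondecreasing and \<open>u\<^sub>j\<close> is convex.\<close>

lemma antimono_on_if_DERIV_nonpos:
  fixes f f' :: "real \<Rightarrow> real"
  assumes deriv: "\<And>t. t \<in> {a..b} \<Longrightarrow> (f has_real_derivative f' t) (at t within {a..b})"
    and nonpos: "\<And>t. t \<in> {a..b} \<Longrightarrow> f' t \<le> 0"
  shows "antimono_on {a..b} f"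
proof (rule monotone_onI)
  fix x y assume xy: "x \<in> {a..b}" "y \<in> {a..b}" "x \<le> y"
  have "continuous_on {a..b} f"
    using deriv by (rule DERIV_continuous_on)
  then have "continuous_on {x..y} f"
    by (rule continuous_on_subset) (use xy in auto)
  moreover have "\<exists>D. (f has_real_derivative D) (at z) \<and> D \<le> 0" if "x < z" "z < y" for z
    using deriv[of z] nonpos[of z] that xy at_within_Icc_at[of a z b] by auto
  ultimately show "f y \<le> f x"
    using DERIV_nonpos_imp_decreasing_open[OF \<open>x \<le> y\<close>] by blast
qed

lemma convex_on_Icc_if_DERIV_mono:
  fixes f f' :: "real \<Rightarrow> real"
  assumes deriv: "\<And>t. t \<in> {a..b} \<Longrightarrow> (f has_real_derivative f' t) (at t within {a..b})"
    and mono: "mono_on {a..b} f'"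
  shows "convex_on {a..b} f"
proof (rule convex_on_linorderI)
  have deriv_sub: "(f has_real_derivative f' t) (at t within {x..y})"
    if "t \<in> {x..y}" "a \<le> x" "y \<le> b" for t x y
    using deriv[of t] that by (auto intro: has_field_derivative_subset)
  have tangent_left: "f z \<le> f x + (z - x) * f' z" if "a \<le> x" "x \<le> z" "z \<le> b" for x z
  proof -
    have "antimono_on {x..z} (\<lambda>t. f t - t * f' z)"
    proof (rule antimono_on_if_DERIV_nonpos)
      fix t assume t: "t \<in> {x..z}"
      show "((\<lambda>t. f t - t * f' z) has_real_derivative f' t - f' z) (at t within {x..z})"
        using deriv_sub[OF t] that by (auto intro!: derivative_eq_intros)
      show "f' t - f' z \<le> 0"
        using mono t that by (auto intro: mono_onD)
    qed
    then have "f z - z * f' z \<le> f x - x * f' z"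
      using that by (auto dest: monotone_onD)
    then show ?thesis by (simp add: algebra_simps)
  qed
  have tangent_right: "f z + (y - z) * f' z \<le> f y" if "a \<le> z" "z \<le> y" "y \<le> b" for y z
  proof -
    have "antimono_on {z..y} (\<lambda>t. t * f' z - f t)"
    proof (rule antimono_on_if_DERIV_nonpos)
      fix t assume t: "t \<in> {z..y}"
      show "((\<lambda>t. t * f' z - f t) has_real_derivative f' z - f' t) (at t within {z..y})"
        using deriv_sub[OF t] that by (auto intro!: derivative_eq_intros)
      show "f' z - f' t \<le> 0"
        using mono t that by (auto intro: mono_onD)
    qed
    then have "y * f' z - f y \<le> z * f' z - f z"
      using that by (auto dest: monotone_onD)
    then show ?thesis by (simp add: algebra_simps)
  qed
  fix t x y :: real
  assume t: "0 < t" "t < 1" and xy: "x \<in> {a..b}" "y \<in> {a..b}" "x < y"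
  define z where "z = (1 - t) * x + t * y"
  have "z - x = t * (y - x)" "y - z = (1 - t) * (y - x)"
    by (simp_all add: z_def algebra_simps)
  then have z: "x \<le> z" "z \<le> y"
    using t xy by (smt (verit) mult_nonneg_nonneg)+
  \<comment> \<open>\<open>(1 - t) (z - x) = t (y - z)\<close>: the two tangent terms cancel.\<close>
  have "f z = (1 - t) * (f z - (z - x) * f' z) + t * (f z + (y - z) * f' z)"
    by (simp add: z_def algebra_simps)
  also have "\<dots> \<le> (1 - t) * f x + t * f y"
    using tangent_left[of x z] tangent_right[of z y] z xy t
    by (intro add_mono mult_left_mono) auto
  finally show "f ((1 - t) *\<^sub>R x + t *\<^sub>R y) \<le> (1 - t) * f x + t * f y"
    by (simp add: z_def)
qed simp

lemma gronwall_zero: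
  fixes f f' :: "real \<Rightarrow> real"
  assumes deriv: "\<And>t. t \<in> {a..b} \<Longrightarrow> (f has_real_derivative f' t) (at t within {a..b})"
    and le: "\<And>t. t \<in> {a..b} \<Longrightarrow> f' t \<le> C * f t"
    and nonneg: "\<And>t. t \<in> {a..b} \<Longrightarrow> 0 \<le> f t"
    and init: "f a = 0"
    and t: "t \<in> {a..b}"
  shows "f t = 0"
proof -
  have "antimono_on {a..b} (\<lambda>t. f t * exp (- C * t))"
  proof (rule antimono_on_if_DERIV_nonpos)
    fix t assume t: "t \<in> {a..b}"
    show "((\<lambda>t. f t * exp (- C * t)) has_real_derivative (f' t - C * f t) * exp (- C * t))
        (at t within {a..b})"
      using deriv[OF t] by (auto intro!: derivative_eq_intros simp: algebra_simps)
    show "(f' t - C * f t) * exp (- C * t) \<le> 0"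
      using le[OF t] by (simp add: mult_nonpos_nonneg)
  qed
  then have "f t * exp (- C * t) \<le> f a * exp (- C * a)"
    using t by (auto intro: monotone_onD)
  then have "f t \<le> 0"
    using init by (simp add: mult_le_0_iff)
  with nonneg[OF t] show ?thesis by simp
qed

definition sq_neg_part :: "real \<Rightarrow> real" where
  "sq_neg_part x = (min x 0)\<^sup>2"

lemma has_real_derivative_sq_neg_part:
  "(sq_neg_part has_real_derivative 2 * min x 0) (at x)"
proof -
  consider "x < 0" | "0 < x" | "x = 0" by linarith
  then show ?thesis
  proof cases
    case 1
    have "((\<lambda>y. y\<^sup>2) has_real_derivative 2 * min x 0) (at x)"
      using 1 by (auto intro!: derivative_eq_intros)
    then show ?thesis
      by (rule has_field_derivative_transform_within_open[where S = "{..<0}"])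
        (use 1 in \<open>auto simp: sq_neg_part_def\<close>)
  next
    case 2
    have "((\<lambda>y. 0) has_real_derivative 2 * min x 0) (at x)"
      using 2 by simp
    then show ?thesis
      by (rule has_field_derivative_transform_within_open[where S = "{0<..}"])
        (use 2 in \<open>auto simp: sq_neg_part_def\<close>)
  next
    case 3
    have "((\<lambda>h. min h 0) \<longlongrightarrow> min 0 0) (at (0::real))"
      by (intro tendsto_intros)
    moreover have "\<forall>\<^sub>F h in at 0. min h 0 = (sq_neg_part (0 + h) - sq_neg_part 0) / h"
      by (auto simp: eventually_at_filter sq_neg_part_def power2_eq_square min_def)
    ultimately show ?thesis
      using 3 unfolding DERIV_def by (simp add: tendsto_cong)
  qed
qed

lemma bounded_on_compact_finite_family:
  fixes f :: "'i \<Rightarrow> 'a::topological_space \<Rightarrow> real"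
  assumes "finite I" "compact S" "\<And>j. j \<in> I \<Longrightarrow> continuous_on S (f j)"
  obtains K where "0 \<le> K" "\<And>j t. j \<in> I \<Longrightarrow> t \<in> S \<Longrightarrow> \<bar>f j t\<bar> \<le> K"
proof -
  let ?h = "\<lambda>t. \<Sum>j\<in>I. \<bar>f j t\<bar>"
  have "continuous_on S ?h"
    using assms(3) by (intro continuous_intros) auto
  then have "bounded (?h ` S)"
    using assms(2) by (intro compact_imp_bounded compact_continuous_image)
  then obtain K where K: "\<And>t. t \<in> S \<Longrightarrow> \<bar>?h t\<bar> \<le> K"
    by (auto simp: bounded_real)
  show thesis
  proof (rule that[of "max K 0"])
    fix j t assume "j \<in> I" "t \<in> S"
    then have "\<bar>f j t\<bar> \<le> ?h t"
      using assms(1) by (intro member_le_sum) auto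
    with K[OF \<open>t \<in> S\<close>] show "\<bar>f j t\<bar> \<le> max K 0" by linarith
  qed simp
qed

lemma neg_part_mult_le:
  fixes x y B K :: real
  assumes "0 \<le> B" "B \<le> K"
  shows "2 * B * (min x 0 * y) \<le> K * ((min x 0)\<^sup>2 + (min y 0)\<^sup>2)"
proof -
  have "2 * B * (min x 0 * y) \<le> 2 * B * (min x 0 * min y 0)"
    using assms by (intro mult_left_mono mult_left_mono_neg) auto
  also have "\<dots> \<le> 2 * K * (min x 0 * min y 0)"
    using assms by (intro mult_right_mono) (auto simp: mult_nonpos_nonpos)
  also have "\<dots> = K * (2 * (min x 0 * min y 0))"
    by simp
  also have "\<dots> \<le> K * ((min x 0)\<^sup>2 + (min y 0)\<^sup>2)"
    using assms sum_squares_bound[of "min x 0" "min y 0"] by (intro mult_left_mono) auto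
  finally show ?thesis .
qed

lemma nonneg_if_cooperative_DERIV:
  fixes x x' a :: "'i \<Rightarrow> real \<Rightarrow> real" and B :: "'i \<Rightarrow> 'i \<Rightarrow> real \<Rightarrow> real"
  assumes "finite I"
    and deriv: "\<And>j t. j \<in> I \<Longrightarrow> t \<in> {t0..t1} \<Longrightarrow>
      (x j has_real_derivative x' j t) (at t within {t0..t1})"
    and ineq: "\<And>j t. j \<in> I \<Longrightarrow> t \<in> {t0..t1} \<Longrightarrow>
      a j t * x j t + (\<Sum>k\<in>I. B j k t * x k t) \<le> x' j t"
    and B_nonneg: "\<And>j k t. j \<in> I \<Longrightarrow> k \<in> I \<Longrightarrow> t \<in> {t0..t1} \<Longrightarrow> 0 \<le> B j k t"
    and a_bound: "\<And>j t. j \<in> I \<Longrightarrow> t \<in> {t0..t1} \<Longrightarrow> \<bar>a j t\<bar> \<le> K"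
    and B_bound: "\<And>j k t. j \<in> I \<Longrightarrow> k \<in> I \<Longrightarrow> t \<in> {t0..t1} \<Longrightarrow> B j k t \<le> K"
    and init: "\<And>j. j \<in> I \<Longrightarrow> 0 \<le> x j t0"
    and j: "j \<in> I" and t: "t \<in> {t0..t1}"
  shows "0 \<le> x j t"
proof -
  \<comment> \<open>\<open>V\<close> vanishes at \<open>t0\<close> and satisfies \<open>V' \<le> C V\<close>, so Gronwall forces \<open>V = 0\<close>.\<close>
  define V where "V t = (\<Sum>j\<in>I. sq_neg_part (x j t))" for t
  define m where "m j t = min (x j t) 0" for j t
  have V_m: "V t = (\<Sum>j\<in>I. (m j t)\<^sup>2)" for t
    by (simp add: V_def m_def sq_neg_part_def)
  have V_deriv: "(V has_real_derivative (\<Sum>j\<in>I. 2 * m j t * x' j t)) (at t within {t0..t1})"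
    if "t \<in> {t0..t1}" for t
    unfolding V_def m_def
    by (intro DERIV_sum DERIV_chain'[OF _ has_real_derivative_sq_neg_part])
      (use deriv that in \<open>auto simp: mult.commute\<close>)
  have term_le: "2 * m j t * x' j t \<le> 2 * K * (m j t)\<^sup>2 + (\<Sum>k\<in>I. K * ((m j t)\<^sup>2 + (m k t)\<^sup>2))"
    if "j \<in> I" "t \<in> {t0..t1}" for j t
  proof -
    have "2 * m j t * x' j t \<le> 2 * m j t * (a j t * x j t + (\<Sum>k\<in>I. B j k t * x k t))"
      using ineq[OF that] by (intro mult_left_mono_neg) (auto simp: m_def)
    also have "\<dots> = 2 * a j t * (m j t)\<^sup>2 + (\<Sum>k\<in>I. 2 * B j k t * (m j t * x k t))"
      by (simp add: m_def sum_distrib_left min_def power2_eq_square algebra_simps)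
    also have "\<dots> \<le> 2 * K * (m j t)\<^sup>2 + (\<Sum>k\<in>I. K * ((m j t)\<^sup>2 + (m k t)\<^sup>2))"
      using a_bound[OF that] B_nonneg[OF that(1) _ that(2)] B_bound[OF that(1) _ that(2)]
      by (intro add_mono mult_right_mono sum_mono) (auto simp: m_def neg_part_mult_le)
    finally show ?thesis .
  qed
  have V_deriv_le: "(\<Sum>j\<in>I. 2 * m j t * x' j t) \<le> 2 * K * (1 + card I) * V t"
    if "t \<in> {t0..t1}" for t
  proof -
    have "(\<Sum>j\<in>I. 2 * m j t * x' j t)
        \<le> (\<Sum>j\<in>I. 2 * K * (m j t)\<^sup>2 + (\<Sum>k\<in>I. K * ((m j t)\<^sup>2 + (m k t)\<^sup>2)))"
      using term_le that by (intro sum_mono) auto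
    also have "\<dots> = 2 * K * (1 + card I) * V t"
      by (simp add: V_m sum.distrib sum_distrib_left algebra_simps)
    finally show ?thesis .
  qed
  have "V t = 0"
  proof (rule gronwall_zero[OF V_deriv V_deriv_le _ _ t])
    show "0 \<le> V s" for s
      by (simp add: V_m sum_nonneg)
    show "V t0 = 0"
      using init by (simp add: V_def sq_neg_part_def)
  qed
  then have "sq_neg_part (x j t) = 0"
    using j \<open>finite I\<close> by (auto simp: V_def sq_neg_part_def sum_nonneg_eq_0_iff)
  then show ?thesis
    by (simp add: sq_neg_part_def min_def split: if_splits)
qed

locale SI_control =
  fixes I :: "'a set" and A :: "'a \<Rightarrow> 'a \<Rightarrow> real" and \<beta> T :: real
    and c :: "'a \<Rightarrow> real" and i lam u :: "'a \<Rightarrow> real \<Rightarrow> real"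
  assumes finite_nodes: "finite I"
    and A_nonneg: "\<And>j k. j \<in> I \<Longrightarrow> k \<in> I \<Longrightarrow> 0 \<le> A j k"
    and beta_nonneg: "0 \<le> \<beta>"
    and c_pos: "\<And>j. j \<in> I \<Longrightarrow> 0 < c j"
    and i_init: "\<And>j. j \<in> I \<Longrightarrow> 0 \<le> i j 0 \<and> i j 0 \<le> 1"
    and state_ode: "\<And>j t. j \<in> I \<Longrightarrow> t \<in> {0..T} \<Longrightarrow>
      (i j has_real_derivative
         \<beta> * (1 - i j t) * (\<Sum>k\<in>I. A j k * i k t) + u j t * (1 - i j t))
      (at t within {0..T})"
    and adjoint_ode: "\<And>j t. j \<in> I \<Longrightarrow> t \<in> {0..T} \<Longrightarrow>
      (lam j has_real_derivative
         - \<beta> * (\<Sum>l\<in>I. lam l t * (1 - i l t) * A l j)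
         + \<beta> * lam j t * (\<Sum>k\<in>I. A j k * i k t) + lam j t * u j t)
      (at t within {0..T})"
    and u_nonneg: "\<And>j t. j \<in> I \<Longrightarrow> t \<in> {0..T} \<Longrightarrow> 0 \<le> u j t"
    and u_stationary: "\<And>j t. j \<in> I \<Longrightarrow> t \<in> {0..T} \<Longrightarrow>
      2 * c j * u j t = lam j t * (1 - i j t)"
begin

lemma continuous_on_state: "j \<in> I \<Longrightarrow> continuous_on {0..T} (i j)"
  using state_ode by (intro DERIV_continuous_on) blast

lemma has_real_derivative_control:
  assumes j: "j \<in> I" and t: "t \<in> {0..T}"
  shows "(u j has_real_derivative - \<beta> * (1 - i j t) * (\<Sum>l\<in>I. c l * u l t * A l j) / c j)
    (at t within {0..T})"
proof -
  have "((\<lambda>t. lam j t * (1 - i j t)) has_real_derivative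
      - \<beta> * (1 - i j t) * (\<Sum>l\<in>I. lam l t * (1 - i l t) * A l j)) (at t within {0..T})"
    using adjoint_ode[OF j t] state_ode[OF j t]
    by (auto intro!: derivative_eq_intros simp: algebra_simps)
  then have "((\<lambda>t. lam j t * (1 - i j t) / (2 * c j)) has_real_derivative
      - \<beta> * (1 - i j t) * (\<Sum>l\<in>I. lam l t * (1 - i l t) * A l j) / (2 * c j))
      (at t within {0..T})"
    by (rule DERIV_cdivide)
  moreover have "(\<Sum>l\<in>I. lam l t * (1 - i l t) * A l j) = 2 * (\<Sum>l\<in>I. c l * u l t * A l j)"
    unfolding sum_distrib_left
    by (intro sum.cong refl) (simp add: u_stationary[OF _ t, symmetric] mult.assoc)
  ultimately have "((\<lambda>t. lam j t * (1 - i j t) / (2 * c j)) has_real_derivative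
      - \<beta> * (1 - i j t) * (\<Sum>l\<in>I. c l * u l t * A l j) / c j) (at t within {0..T})"
    by (simp add: mult.assoc)
  moreover have "lam j s * (1 - i j s) / (2 * c j) = u j s" if "s \<in> {0..T}" for s
    using u_stationary[OF j that] c_pos[OF j] by (simp add: field_simps)
  ultimately show ?thesis
    by (rule has_field_derivative_transform_within[OF _ zero_less_one t])
qed

lemma continuous_on_control: "j \<in> I \<Longrightarrow> continuous_on {0..T} (u j)"
  using has_real_derivative_control by (intro DERIV_continuous_on) blast

lemma state_le_one:
  assumes j: "j \<in> I" and t: "t \<in> {0..T}"
  shows "i j t \<le> 1"
proof -
  let ?rate = "\<lambda>j t. \<beta> * (\<Sum>k\<in>I. A j k * i k t) + u j t"
  obtain K where K: "0 \<le> K" "\<And>j t. j \<in> I \<Longrightarrow> t \<in> {0..T} \<Longrightarrow> \<bar>?rate j t\<bar> \<le> K"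
    by (rule bounded_on_compact_finite_family[OF finite_nodes compact_Icc, where f = ?rate])
      (auto intro!: continuous_intros continuous_on_state continuous_on_control)
  have "0 \<le> 1 - i j t"
  proof (rule nonneg_if_cooperative_DERIV[OF finite_nodes _ _ _ _ _ _ j t,
        where x' = "\<lambda>j t. - ?rate j t * (1 - i j t)" and a = "\<lambda>j t. - ?rate j t"
          and B = "\<lambda>_ _ _. 0" and K = K])
    show "((\<lambda>t. 1 - i j t) has_real_derivative - ?rate j t * (1 - i j t)) (at t within {0..T})"
      if "j \<in> I" "t \<in> {0..T}" for j t
      using state_ode[OF that] by (auto intro!: derivative_eq_intros simp: algebra_simps)
    show "\<bar>- ?rate j t\<bar> \<le> K" if "j \<in> I" "t \<in> {0..T}" for j t
      using K(2)[OF that] by (simp only: abs_minus_cancel)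
  qed (use K i_init in auto)
  then show ?thesis by simp
qed

lemma state_nonneg:
  assumes j: "j \<in> I" and t: "t \<in> {0..T}"
  shows "0 \<le> i j t"
proof -
  let ?B = "\<lambda>j k t. \<beta> * (1 - i j t) * A j k"
  obtain K where K: "0 \<le> K"
    "\<And>jk t. jk \<in> I \<times> I \<Longrightarrow> t \<in> {0..T} \<Longrightarrow> \<bar>case_prod ?B jk t\<bar> \<le> K"
    by (rule bounded_on_compact_finite_family[OF _ compact_Icc,
          where I = "I \<times> I" and f = "case_prod ?B"])
      (auto simp: finite_nodes intro!: continuous_intros continuous_on_state)
  show ?thesis
  proof (rule nonneg_if_cooperative_DERIV[OF finite_nodes state_ode _ _ _ _ _ j t,
        where a = "\<lambda>_ _. 0" and B = ?B and K = K])
    show "0 * i j t + (\<Sum>k\<in>I. ?B j k t * i k t)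
        \<le> \<beta> * (1 - i j t) * (\<Sum>k\<in>I. A j k * i k t) + u j t * (1 - i j t)"
      if "j \<in> I" "t \<in> {0..T}" for j t
      using u_nonneg[OF that] state_le_one[OF that]
      by (simp add: sum_distrib_left mult.assoc)
    show "0 \<le> ?B j k t" if "j \<in> I" "k \<in> I" "t \<in> {0..T}" for j k t
      using beta_nonneg A_nonneg[OF that(1,2)] state_le_one[OF that(1,3)] by simp
    show "?B j k t \<le> K" if "j \<in> I" "k \<in> I" "t \<in> {0..T}" for j k t
      using K(2)[of "(j, k)" t] that by simp
  qed (use K i_init in auto)
qed

lemma antimono_on_susceptible: "j \<in> I \<Longrightarrow> antimono_on {0..T} (\<lambda>t. 1 - i j t)"
proof (rule antimono_on_if_DERIV_nonpos)
  fix t assume j: "j \<in> I" and t: "t \<in> {0..T}"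
  show "((\<lambda>t. 1 - i j t) has_real_derivative
      - (\<beta> * (1 - i j t) * (\<Sum>k\<in>I. A j k * i k t) + u j t * (1 - i j t))) (at t within {0..T})"
    using state_ode[OF j t] by (auto intro!: derivative_eq_intros)
  have "0 \<le> (\<Sum>k\<in>I. A j k * i k t)"
    using A_nonneg j state_nonneg t by (auto intro!: sum_nonneg)
  then have "0 \<le> \<beta> * (1 - i j t) * (\<Sum>k\<in>I. A j k * i k t)" "0 \<le> u j t * (1 - i j t)"
    using beta_nonneg state_le_one[OF j t] u_nonneg[OF j t] by simp_all
  then show "- (\<beta> * (1 - i j t) * (\<Sum>k\<in>I. A j k * i k t) + u j t * (1 - i j t)) \<le> 0"
    by linarith
qed

lemma neighbour_control_nonneg:
  "j \<in> I \<Longrightarrow> t \<in> {0..T} \<Longrightarrow> 0 \<le> (\<Sum>l\<in>I. c l * u l t * A l j)"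
  using c_pos u_nonneg A_nonneg by (intro sum_nonneg mult_nonneg_nonneg) (auto intro: less_imp_le)

lemma antimono_on_control: "j \<in> I \<Longrightarrow> antimono_on {0..T} (u j)"
proof (rule antimono_on_if_DERIV_nonpos[OF has_real_derivative_control])
  fix t assume j: "j \<in> I" and t: "t \<in> {0..T}"
  show "- \<beta> * (1 - i j t) * (\<Sum>l\<in>I. c l * u l t * A l j) / c j \<le> 0"
    using beta_nonneg state_le_one[OF j t] neighbour_control_nonneg[OF j t] c_pos[OF j]
    by (simp add: divide_nonneg_pos mult_nonneg_nonneg)
qed

lemma antimono_on_neighbour_control:
  "j \<in> I \<Longrightarrow> antimono_on {0..T} (\<lambda>t. \<Sum>l\<in>I. c l * u l t * A l j)"
proof (rule monotone_onI)
  fix x y assume j: "j \<in> I" and xy: "x \<in> {0..T}" "y \<in> {0..T}" "x \<le> y"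
  show "(\<Sum>l\<in>I. c l * u l y * A l j) \<le> (\<Sum>l\<in>I. c l * u l x * A l j)"
    using monotone_onD[OF antimono_on_control xy] c_pos A_nonneg j
    by (intro sum_mono mult_right_mono mult_left_mono) (auto intro: less_imp_le)
qed

lemma convex_on_control: "j \<in> I \<Longrightarrow> convex_on {0..T} (u j)"
proof (rule convex_on_Icc_if_DERIV_mono[OF has_real_derivative_control])
  assume j: "j \<in> I"
  show "mono_on {0..T} (\<lambda>t. - \<beta> * (1 - i j t) * (\<Sum>l\<in>I. c l * u l t * A l j) / c j)"
  proof (rule monotone_onI)
    fix x y assume xy: "x \<in> {0..T}" "y \<in> {0..T}" "x \<le> y"
    have "(1 - i j y) * (\<Sum>l\<in>I. c l * u l y * A l j)
        \<le> (1 - i j x) * (\<Sum>l\<in>I. c l * u l x * A l j)"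
      using monotone_onD[OF antimono_on_susceptible[OF j] xy]
        monotone_onD[OF antimono_on_neighbour_control[OF j] xy]
        state_le_one[OF j] neighbour_control_nonneg[OF j] xy
      by (intro mult_mono) auto
    then show "- \<beta> * (1 - i j x) * (\<Sum>l\<in>I. c l * u l x * A l j) / c j
        \<le> - \<beta> * (1 - i j y) * (\<Sum>l\<in>I. c l * u l y * A l j) / c j"
      using beta_nonneg c_pos[OF j]
      by (simp add: divide_right_mono mult_left_mono mult.assoc)
  qed
qed

end

theorem theorem2:
  fixes N :: nat and A :: "nat \<Rightarrow> nat \<Rightarrow> real" and \<beta> T :: real
    and x0 c :: "nat \<Rightarrow> real"
    and i lam u :: "nat \<Rightarrow> real \<Rightarrow> real"
  assumes N_pos: "N \<ge> 1"
    and A_01: "\<forall>j\<in>{1..N}. \<forall>k\<in>{1..N}. A j k \<in> {0, 1}"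
    and A_sym: "\<forall>j\<in>{1..N}. \<forall>k\<in>{1..N}. A j k = A k j"
    and beta_pos: "\<beta> > 0" and T_pos: "T > 0"
    and x0_range: "\<forall>j\<in>{1..N}. 0 \<le> x0 j \<and> x0 j \<le> 1"
    and c_pos: "\<forall>j\<in>{1..N}. c j > 0"
    and state_ode: "\<forall>j\<in>{1..N}. \<forall>t\<in>{0..T}.
        (i j has_real_derivative
           (\<beta> * (1 - i j t) * (\<Sum>k=1..N. A j k * i k t) + u j t * (1 - i j t)))
        (at t within {0..T})"
    and state_init: "\<forall>j\<in>{1..N}. i j 0 = x0 j"
    and adjoint_ode: "\<forall>j\<in>{1..N}. \<forall>t\<in>{0..T}.
        (lam j has_real_derivative
           (- \<beta> * (\<Sum>l=1..N. lam l t * (1 - i l t) * A l j)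
            + \<beta> * lam j t * (\<Sum>k=1..N. A j k * i k t) + lam j t * u j t))
        (at t within {0..T})"
    and adjoint_final: "\<forall>j\<in>{1..N}. lam j T = 1 / real N"
    and u_nonneg: "\<forall>j\<in>{1..N}. \<forall>t\<in>{0..T}. u j t \<ge> 0"
    and u_max: "\<forall>j\<in>{1..N}. \<forall>t\<in>{0..T}.
        deriv (\<lambda>v. c j * v\<^sup>2) (u j t) = lam j t * (1 - i j t)"
  shows "\<forall>j\<in>{1..N}. convex_on {0..T} (u j)"
proof -
  interpret SI_control "{1..N}" A \<beta> T c i lam u
  proof
    show "0 \<le> A j k" if "j \<in> {1..N}" "k \<in> {1..N}" for j k
      using A_01 that by fastforce
    show "2 * c j * u j t = lam j t * (1 - i j t)" if "j \<in> {1..N}" "t \<in> {0..T}" for j t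
    proof -
      have "deriv (\<lambda>v. c j * v\<^sup>2) (u j t) = 2 * c j * u j t"
        by (rule DERIV_imp_deriv) (auto intro!: derivative_eq_intros)
      with u_max that show ?thesis by simp
    qed
  qed (use beta_pos c_pos x0_range state_init state_ode adjoint_ode u_nonneg in auto)
  show ?thesis
    using convex_on_control by blast
qed

end
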